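(* Let $R$ be a ring with unity and involution $*$, and let $a\in R$ be left dual pseudo core invertible with left dual pseudo core index $I(a)=k$. Then there exist $a_1,a_2\in R$ with $a^k=a_1+a_2$ such that (1) $a_1$ is left dual core invertible, (2) $a_2^2=0$, (3) $a_2^*a_1=0=a_1a_2$. In addition, for any left dual pseudo core inverse $y$ of $a$, the element $ya^{k+1}$ is left dual core invertible and $y^k$ is a left dual core inverse of it.
   Context: $a$ is left dual pseudo core invertible if there exist $y\in R$ and a positive integer $k$ such that $a^kya=a^k$, $(ya)^*=ya$ and $y^2a=y$; such $y$ is a left dual pseudo core inverse of $a$, and the smallest such $k$ is the left dual pseudo core index $I(a)$. An element $u$ is left dual core invertible if there exists $z$ with $uzu=u$, $(zu)^*=zu$ and $z^2u=z$; such $z$ is a left dual core inverse of $u$. *)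

theory Defs
  imports Main
begin

class ring_1_invol = ring_1 +
  fixes invol :: "'a \<Rightarrow> 'a"
  assumes invol_add: "invol (x + y) = invol x + invol y"
      and invol_mult: "invol (x * y) = invol y * invol x"
      and invol_invol: "invol (invol x) = x"

definition ldpc_inverse_k :: "nat \<Rightarrow> 'a::ring_1_invol \<Rightarrow> 'a \<Rightarrow> bool" where
  "ldpc_inverse_k k a y \<longleftrightarrow>
     0 < k \<and> a ^ k * y * a = a ^ k \<and> invol (y * a) = y * a \<and> y ^ 2 * a = y"

definition ldpc_inverse :: "'a::ring_1_invol \<Rightarrow> 'a \<Rightarrow> bool" where
  "ldpc_inverse a y \<longleftrightarrow> (\<exists>k. ldpc_inverse_k k a y)"

definition ldpc_invertible :: "'a::ring_1_invol \<Rightarrow> bool" where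
  "ldpc_invertible a \<longleftrightarrow> (\<exists>y. ldpc_inverse a y)"

definition ldpc_index :: "'a::ring_1_invol \<Rightarrow> nat" where
  "ldpc_index a = (LEAST k. \<exists>y. ldpc_inverse_k k a y)"

definition ldc_inverse :: "'a::ring_1_invol \<Rightarrow> 'a \<Rightarrow> bool" where
  "ldc_inverse u z \<longleftrightarrow> u * z * u = u \<and> invol (z * u) = z * u \<and> z ^ 2 * u = z"

definition ldc_invertible :: "'a::ring_1_invol \<Rightarrow> bool" where
  "ldc_invertible u \<longleftrightarrow> (\<exists>z. ldc_inverse u z)"

end

theory Submission
  imports Defs
begin

text \<open>Any two left dual pseudo core inverses y, y' of a, of whatever indices, give the same
  self-adjoint idempotent p = y a, because y^j a^j = y a for all j > 0 lets each projection
  absorb the other. For an inverse of index k, a^k p = a^k, so a^k splits as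
  p a^k + (1 - p) a^k: the first summand is y a^(k+1), which has y^k as left dual core inverse,
  and the second is killed by a^k from the left, hence is square-zero and orthogonal to the
  first.\<close>

lemma invol_0 [simp]: "invol (0::'a::ring_1_invol) = 0"
proof -
  have "invol 0 = invol 0 + invol (0::'a)" using invol_add[of 0 0] by simp
  then show ?thesis by simp
qed

lemma invol_eq_0_iff [simp]: "invol (x::'a::ring_1_invol) = 0 \<longleftrightarrow> x = 0"
  by (metis invol_0 invol_invol)

lemma self_adjoint_idempotent_split:
  fixes b p :: "'a::ring_1_invol"
  assumes "p * p = p" and "invol p = p" and "b * p = b"
  defines "a1 \<equiv> p * b" and "a2 \<equiv> b - p * b"
  shows "a2 ^ 2 = 0" and "invol a2 * a1 = 0" and "a1 * a2 = 0"
proof -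
  have b_a2: "b * a2 = 0"
    unfolding a2_def using assms(3) by (simp add: right_diff_distrib mult.assoc[symmetric])
  have p_a2: "p * a2 = 0"
    unfolding a2_def using assms(1) by (simp add: right_diff_distrib mult.assoc[symmetric])
  show "a2 ^ 2 = 0"
    using b_a2 unfolding power2_eq_square by (simp add: a2_def left_diff_distrib mult.assoc)
  show "a1 * a2 = 0"
    using b_a2 by (simp add: a1_def mult.assoc)
  have "invol a1 * a2 = invol b * (p * a2)"
    by (simp add: a1_def invol_mult assms(2) mult.assoc)
  then have "invol (invol a2 * a1) = 0"
    using p_a2 by (simp add: invol_mult invol_invol)
  then show "invol a2 * a1 = 0" by simp
qed

lemma power_Suc_mult_power_absorb:
  fixes y :: "'a::ring_1_invol"
  assumes "y ^ 2 * a = y"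
  shows "y ^ Suc j * a ^ j = y"
proof (induction j)
  case 0
  then show ?case by simp
next
  case (Suc j)
  have "y ^ Suc (Suc j) * a ^ Suc j = y * (y ^ Suc j * a ^ j) * a"
    by (simp add: power_Suc2 mult.assoc power_commutes)
  also have "\<dots> = y" using Suc assms by (simp add: power2_eq_square mult.assoc)
  finally show ?case .
qed

lemma power_mult_power_eq:
  fixes y :: "'a::ring_1_invol"
  assumes "y ^ 2 * a = y" and "0 < j"
  shows "y ^ j * a ^ j = y * a"
proof -
  obtain i where j: "j = Suc i" using assms(2) by (cases j) auto
  have "y ^ j * a ^ j = (y ^ Suc i * a ^ i) * a"
    by (simp add: j power_Suc2 mult.assoc power_commutes)
  then show ?thesis using power_Suc_mult_power_absorb[OF assms(1)] by simp
qed

lemma ldpc_inverse_k_projection_idem: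
  assumes "ldpc_inverse_k k a y"
  shows "(y * a) * (y * a) = y * a"
proof -
  have y: "y ^ 2 * a = y" "a ^ k * y * a = a ^ k"
    using assms unfolding ldpc_inverse_k_def by auto
  have "(y * a) * (y * a) = (y ^ Suc k * a ^ k) * a * y * a"
    using power_Suc_mult_power_absorb[OF y(1), of k] by (simp add: mult.assoc)
  also have "\<dots> = y ^ Suc k * (a * (a ^ k * y * a))"
    by (simp add: mult.assoc power_commutes)
  also have "\<dots> = y ^ Suc k * a ^ Suc k" using y(2) by simp
  also have "\<dots> = y * a" using power_mult_power_eq[OF y(1), of "Suc k"] by simp
  finally show ?thesis .
qed

lemma ldpc_inverse_k_projection_absorb:
  assumes "ldpc_inverse_k k a y" and "ldpc_inverse_k m a y'"
  shows "y * a = (y * a) * (y' * a)"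
proof -
  have y: "0 < m \<longrightarrow> y ^ m * a ^ m = y * a"
    using assms(1) power_mult_power_eq unfolding ldpc_inverse_k_def by blast
  have y': "0 < m" "a ^ m * y' * a = a ^ m"
    using assms(2) unfolding ldpc_inverse_k_def by auto
  have "y * a = y ^ m * (a ^ m * y' * a)" using y y' by simp
  also have "\<dots> = (y ^ m * a ^ m) * (y' * a)" by (simp add: mult.assoc)
  also have "\<dots> = (y * a) * (y' * a)" using y y' by simp
  finally show ?thesis .
qed

lemma ldpc_inverse_k_projection_unique:
  assumes "ldpc_inverse_k k a y" and "ldpc_inverse_k m a y'"
  shows "y * a = y' * a"
proof -
  have adj: "invol (y * a) = y * a" "invol (y' * a) = y' * a"
    using assms unfolding ldpc_inverse_k_def by auto
  have "y * a = invol ((y * a) * (y' * a))"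
    using ldpc_inverse_k_projection_absorb[OF assms] adj(1) by simp
  also have "\<dots> = (y' * a) * (y * a)" using adj by (simp add: invol_mult)
  also have "\<dots> = y' * a" using ldpc_inverse_k_projection_absorb[OF assms(2,1)] by simp
  finally show ?thesis .
qed

lemma ldpc_inverse_k_transfer:
  assumes "ldpc_inverse_k k a y'" and "ldpc_inverse a y"
  shows "ldpc_inverse_k k a y"
proof -
  obtain m where "ldpc_inverse_k m a y" using assms(2) unfolding ldpc_inverse_def by blast
  then have "y * a = y' * a" using ldpc_inverse_k_projection_unique assms(1) by blast
  then have "a ^ k * y * a = a ^ k * y' * a" by (simp add: mult.assoc)
  with assms(1) \<open>ldpc_inverse_k m a y\<close> show ?thesis unfolding ldpc_inverse_k_def by simp
qed

lemma ldc_inverse_of_ldpc_inverse_k: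
  assumes "ldpc_inverse_k k a y"
  shows "ldc_inverse (y * a ^ (k + 1)) (y ^ k)"
proof -
  have y: "0 < k" "a ^ k * y * a = a ^ k" "invol (y * a) = y * a" "y ^ 2 * a = y"
    using assms unfolding ldpc_inverse_k_def by auto
  obtain i where i: "k = Suc i" using y(1) by (cases k) auto
  have zu: "y ^ k * (y * a ^ (k + 1)) = y * a"
    using power_mult_power_eq[OF y(4), of "Suc k"]
    by (simp add: mult.assoc[symmetric] power_commutes)
  have "y * a ^ (k + 1) * y ^ k * (y * a ^ (k + 1)) = y * (a * (a ^ k * y * a))"
    using zu by (simp add: mult.assoc)
  then have uzu: "y * a ^ (k + 1) * y ^ k * (y * a ^ (k + 1)) = y * a ^ (k + 1)"
    using y(2) by simp
  have "(y ^ k) ^ 2 * (y * a ^ (k + 1)) = y ^ k * (y * a)"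
    using zu by (simp add: power2_eq_square mult.assoc)
  also have "\<dots> = y ^ i * (y ^ 2 * a)"
    by (simp add: i power2_eq_square mult.assoc[symmetric] power_commutes)
  also have "\<dots> = y ^ k" using y(4) by (simp add: i power_Suc2 power_commutes)
  finally have zzu: "(y ^ k) ^ 2 * (y * a ^ (k + 1)) = y ^ k" .
  show ?thesis unfolding ldc_inverse_def using uzu zzu zu y(3) by (simp add: mult.assoc)
qed

lemma ldpc_inverse_k_core_nilpotent_split:
  assumes "ldpc_inverse_k k a y"
  shows "\<exists>a1 a2. a ^ k = a1 + a2 \<and> ldc_invertible a1 \<and> a2 ^ 2 = 0 \<and>
           invol a2 * a1 = 0 \<and> a1 * a2 = 0"
proof -
  have "invol (y * a) = y * a" and "a ^ k * (y * a) = a ^ k"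
    using assms unfolding ldpc_inverse_k_def by (auto simp: mult.assoc)
  note split = self_adjoint_idempotent_split
    [OF ldpc_inverse_k_projection_idem[OF assms] this]
  have "y * a * a ^ k = y * a ^ (k + 1)" by (simp add: mult.assoc power_commutes)
  then have "ldc_invertible (y * a * a ^ k)"
    using ldc_inverse_of_ldpc_inverse_k[OF assms] unfolding ldc_invertible_def by auto
  with split show ?thesis
    by (intro exI[of _ "y * a * a ^ k"] exI[of _ "a ^ k - y * a * a ^ k"]) simp
qed

lemma ldpc_index_attained:
  assumes "ldpc_invertible a"
  shows "\<exists>y. ldpc_inverse_k (ldpc_index a) a y"
proof -
  obtain m y where "ldpc_inverse_k m a y"
    using assms unfolding ldpc_invertible_def ldpc_inverse_def by blast
  then have "\<exists>y. ldpc_inverse_k m a y" ..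
  then show ?thesis unfolding ldpc_index_def by (rule LeastI)
qed

theorem corollary3p16:
  fixes a :: "'a::ring_1_invol"
  assumes "ldpc_invertible a" and "ldpc_index a = k"
  shows "(\<exists>a1 a2. a ^ k = a1 + a2 \<and> ldc_invertible a1 \<and> a2 ^ 2 = 0 \<and>
            invol a2 * a1 = 0 \<and> a1 * a2 = 0)
       \<and> (\<forall>y. ldpc_inverse a y \<longrightarrow>
              ldc_invertible (y * a ^ (k + 1)) \<and> ldc_inverse (y * a ^ (k + 1)) (y ^ k))"
proof -
  obtain y' where y': "ldpc_inverse_k k a y'"
    using ldpc_index_attained[OF assms(1)] assms(2) by blast
  have "ldc_inverse (y * a ^ (k + 1)) (y ^ k)" if "ldpc_inverse a y" for y
    using ldc_inverse_of_ldpc_inverse_k ldpc_inverse_k_transfer[OF y' that] by blast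
  then show ?thesis
    using ldpc_inverse_k_core_nilpotent_split[OF y'] unfolding ldc_invertible_def by blast
qed

end
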